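(* Let $m\ge2$ and let $\mathbb N$ be the directed cycle $1\to2\to\cdots\to m\to1$, the arc from $i-1$ to $i$ (vertex $0$ being vertex $m$) carrying a real matrix $C_i$ with $n$ columns. There exist matrices $C_1,\dots,C_m$ with $\ker C_i\neq 0$ for all $i$ such that $\bar{\mathbb N}$ is well-configured (i.e. $C_ix_i=C_ix_{i-1}$ for all $i$, with $x_0:=x_m$, implies $x_1=\cdots=x_m$ for all $x_1,\dots,x_m\in\mathbb R^n$) if and only if $m\le n$.
   Context: $\bar{\mathbb N}$ denotes the graph $\mathbb N$ together with the matrices assigned to its arcs; well-configuredness is as described in the claim. *)

theory Defs
  imports "Jordan_Normal_Form.Matrix_Kernel"
begin

definition cycle_pred :: "nat \<Rightarrow> nat \<Rightarrow> nat" where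
  "cycle_pred m i = (if i = 1 then m else i - 1)"

definition well_configured_cycle :: "nat \<Rightarrow> nat \<Rightarrow> (nat \<Rightarrow> real mat) \<Rightarrow> bool" where
  "well_configured_cycle m n C \<longleftrightarrow>
     (\<forall>x :: nat \<Rightarrow> real vec.
        (\<forall>i\<in>{1..m}. x i \<in> carrier_vec n) \<longrightarrow>
        (\<forall>i\<in>{1..m}. C i *\<^sub>v x i = C i *\<^sub>v x (cycle_pred m i)) \<longrightarrow>
        (\<forall>i\<in>{1..m}. \<forall>j\<in>{1..m}. x i = x j))"

end

theory Submission
  imports Defs
begin

text \<open>If \<open>d\<^sub>i \<in> ker C\<^sub>i\<close> and \<open>d\<^sub>1 + \<dots> + d\<^sub>m = 0\<close>, the partial sums \<open>x\<^sub>j = d\<^sub>1 + \<dots> + d\<^sub>j\<close>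
  (so \<open>x\<^sub>0 = x\<^sub>m = 0\<close>) satisfy \<open>C\<^sub>i x\<^sub>i = C\<^sub>i x\<^sub>i\<^sub>-\<^sub>1\<close>; well-configuredness forces them to be
  equal, so every \<open>d\<^sub>i\<close> vanishes. Applied to \<open>d\<^sub>i = c\<^sub>i v\<^sub>i\<close> with nonzero \<open>v\<^sub>i \<in> ker C\<^sub>i\<close>,
  this shows that \<open>v\<^sub>1, \<dots>, v\<^sub>m\<close> are linearly independent, whence \<open>m \<le> n\<close>.
  Conversely, for \<open>m \<le> n\<close> let \<open>C\<^sub>i\<close> erase the \<open>i\<close>-th coordinate: each coordinate is
  then preserved along all arcs of the cycle but one, which forces it to be constant
  around the cycle.\<close>

lemma cycle_pred_in_range: "i \<in> {1..m} \<Longrightarrow> cycle_pred m i \<in> {1..m}"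
  by (auto simp: cycle_pred_def)

lemma eq_if_Suc_eq:
  assumes "\<And>j. a \<le> j \<Longrightarrow> j < b \<Longrightarrow> f (Suc j) = f j"
    and "a \<le> i" "i \<le> b"
  shows "f i = f a"
  using assms(2,3)
proof (induction i rule: dec_induct)
  case (step j)
  then show ?case using assms(1)[of j] by simp
qed simp

lemma cycle_constant_if_single_break:
  assumes s: "s \<in> {1..m}"
    and eq: "\<And>i. i \<in> {1..m} \<Longrightarrow> i \<noteq> s \<Longrightarrow> f i = f (cycle_pred m i)"
    and i: "i \<in> {1..m}"
  shows "f i = f s"
proof -
  have Suc_eq: "f (Suc j) = f j" if "1 \<le> j" "j < m" "Suc j \<noteq> s" for j
  proof -
    have "f (Suc j) = f (cycle_pred m (Suc j))" using eq[of "Suc j"] that by simp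
    then show ?thesis using that(1) by (simp add: cycle_pred_def)
  qed
  have above: "f i = f s" if "s \<le> i" "i \<le> m" for i
  proof (rule eq_if_Suc_eq[OF _ that])
    fix j assume "s \<le> j" "j < m"
    then show "f (Suc j) = f j" using s by (intro Suc_eq) auto
  qed
  show ?thesis
  proof (cases "s \<le> i")
    case True
    then show ?thesis using i by (intro above) auto
  next
    case False
    have "f i = f 1"
    proof (rule eq_if_Suc_eq)
      fix j assume "1 \<le> j" "j < i"
      then show "f (Suc j) = f j" using False i by (intro Suc_eq) auto
    qed (use i in auto)
    also have "f 1 = f (cycle_pred m 1)"
      using eq[of 1] False i by simp
    also have "\<dots> = f s"
      using above[of m] s by (simp add: cycle_pred_def)
    finally show ?thesis .
  qed
qed

lemma zero_in_mat_kernel: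
  assumes "A \<in> carrier_mat nr nc"
  shows "0\<^sub>v nc \<in> mat_kernel A"
proof (rule mat_kernelI[OF assms zero_carrier_vec])
  show "A *\<^sub>v 0\<^sub>v nc = 0\<^sub>v nr"
    using assms by (intro eq_vecI) auto
qed

lemma mult_mat_vec_add_kernel:
  assumes "A \<in> carrier_mat nr nc" "x \<in> carrier_vec nc" "d \<in> mat_kernel A"
  shows "A *\<^sub>v (x + d) = A *\<^sub>v x"
  using assms by (simp add: mult_add_distrib_mat_vec mat_kernelD)

lemma well_configured_cycle_kernel_sum_zero:
  assumes wc: "well_configured_cycle m n C"
    and dim: "\<And>i. i \<in> {1..m} \<Longrightarrow> dim_col (C i) = n"
    and ker: "\<And>i. i \<in> {1..m} \<Longrightarrow> d i \<in> mat_kernel (C i)"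
    and sum: "\<And>k. k < n \<Longrightarrow> (\<Sum>i=1..m. d i $ k) = 0"
    and i: "i \<in> {1..m}"
  shows "d i = 0\<^sub>v n"
proof -
  define x where "x j = vec n (\<lambda>k. \<Sum>l=1..j. d l $ k)" for j
  have d_carrier: "d i \<in> carrier_vec n" if "i \<in> {1..m}" for i
    using ker[OF that] dim[OF that] by (simp add: mat_kernel_def)
  have x_carrier: "x j \<in> carrier_vec n" for j
    by (simp add: x_def)
  have x_index: "x i $ k = x (cycle_pred m i) $ k + d i $ k"
    if i: "i \<in> {1..m}" and k: "k < n" for i k
  proof (cases "i = 1")
    case True
    then show ?thesis using sum[OF k] k by (simp add: x_def cycle_pred_def)
  next
    case False
    then obtain j where "i = Suc j" "j \<ge> 1" using i by (cases i) auto
    then show ?thesis using k by (simp add: x_def cycle_pred_def)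
  qed
  have x_step: "x i = x (cycle_pred m i) + d i" if i: "i \<in> {1..m}" for i
    using x_index[OF i] d_carrier[OF i] x_carrier by (intro eq_vecI) auto
  have "C i *\<^sub>v x i = C i *\<^sub>v x (cycle_pred m i)" if i: "i \<in> {1..m}" for i
    unfolding x_step[OF i]
    by (rule mult_mat_vec_add_kernel[OF carrier_matI[OF refl dim[OF i]] x_carrier ker[OF i]])
  then have "x i = x (cycle_pred m i)"
    using wc i cycle_pred_in_range[OF i] x_carrier unfolding well_configured_cycle_def by blast
  then show ?thesis
    using x_index[OF i] d_carrier[OF i] by (intro eq_vecI) auto
qed

lemma card_le_dim_if_coefficients_vanish:
  fixes v :: "'i \<Rightarrow> 'a :: field vec"
  assumes I: "finite I"
    and carrier: "\<And>i. i \<in> I \<Longrightarrow> v i \<in> carrier_vec n"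
    and indep: "\<And>c i. (\<And>k. k < n \<Longrightarrow> (\<Sum>j\<in>I. c j * v j $ k) = 0) \<Longrightarrow> i \<in> I \<Longrightarrow> c i = 0"
  shows "card I \<le> n"
proof -
  interpret V: vec_space "TYPE('a)" n .
  have inj: "inj_on v I"
  proof (rule inj_onI, rule ccontr)
    fix i j assume i: "i \<in> I" and j: "j \<in> I" and vij: "v i = v j" and "i \<noteq> j"
    define c where "c l = (if l = i then 1 else if l = j then -1 else 0 :: 'a)" for l
    have "(\<Sum>l\<in>I. c l * v l $ k) = 0" for k
    proof -
      have "(\<Sum>l\<in>I. c l * v l $ k) = (\<Sum>l\<in>I. (if l = i then v i $ k else 0) - (if l = j then v i $ k else 0))"
        using vij \<open>i \<noteq> j\<close> by (intro sum.cong) (auto simp: c_def)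
      then show ?thesis using I i j by (simp add: sum_subtractf)
    qed
    then have "c i = 0" using indep i by blast
    then show False by (simp add: c_def)
  qed
  have S: "v ` I \<subseteq> carrier_vec n" using carrier by auto
  have lincomb_zero: "\<forall>w\<in>v ` I. a w = 0" if lc: "V.lincomb a (v ` I) = 0\<^sub>v n" for a
  proof -
    have "(\<Sum>j\<in>I. a (v j) * v j $ k) = 0" if k: "k < n" for k
    proof -
      have "(\<Sum>j\<in>I. a (v j) * v j $ k) = (\<Sum>w\<in>v ` I. a w * w $ k)"
        using sum.reindex[OF inj, of "\<lambda>w. a w * w $ k"] by simp
      also have "\<dots> = V.lincomb a (v ` I) $ k"
        using V.lincomb_index[OF k S] by simp
      finally show ?thesis using lc k by simp
    qed
    then show ?thesis using indep[of "a \<circ> v"] by auto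
  qed
  have "V.lin_indpt (v ` I)"
    by (rule V.finite_lin_indpt2[OF finite_imageI[OF I] S]) (simp add: lincomb_zero)
  then have "card (v ` I) \<le> n"
    using V.li_le_dim(2)[OF V.fin_dim S] V.dim_is_n by simp
  then show ?thesis using card_image[OF inj] by simp
qed

lemma le_if_well_configured_cycle:
  assumes wc: "well_configured_cycle m n C"
    and ker: "\<forall>i\<in>{1..m}. dim_col (C i) = n \<and> mat_kernel (C i) \<noteq> {0\<^sub>v n}"
  shows "m \<le> n"
proof -
  have dim: "dim_col (C i) = n" if "i \<in> {1..m}" for i
    using ker that by blast
  have "\<forall>i\<in>{1..m}. \<exists>w. w \<in> mat_kernel (C i) \<and> w \<noteq> 0\<^sub>v n"
  proof
    fix i assume i: "i \<in> {1..m}"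
    have "0\<^sub>v n \<in> mat_kernel (C i)"
      by (rule zero_in_mat_kernel[OF carrier_matI[OF refl dim[OF i]]])
    moreover have "mat_kernel (C i) \<noteq> {0\<^sub>v n}" using ker i by blast
    ultimately show "\<exists>w. w \<in> mat_kernel (C i) \<and> w \<noteq> 0\<^sub>v n" by blast
  qed
  then obtain v where v: "\<forall>i\<in>{1..m}. v i \<in> mat_kernel (C i) \<and> v i \<noteq> 0\<^sub>v n"
    by (rule bchoice[THEN exE])
  have v_ker: "v i \<in> mat_kernel (C i)" and v_nonzero: "v i \<noteq> 0\<^sub>v n" if "i \<in> {1..m}" for i
    using v that by auto
  have v_carrier: "v i \<in> carrier_vec n" if "i \<in> {1..m}" for i
    using v_ker[OF that] dim[OF that] by (simp add: mat_kernel_def)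
  have "card {1..m} \<le> n"
  proof (rule card_le_dim_if_coefficients_vanish[of _ v])
    fix c :: "nat \<Rightarrow> real" and i
    assume sum: "\<And>k. k < n \<Longrightarrow> (\<Sum>j\<in>{1..m}. c j * v j $ k) = 0" and i: "i \<in> {1..m}"
    have smult_index: "(c j \<cdot>\<^sub>v v j) $ k = c j * v j $ k" if "j \<in> {1..m}" "k < n" for j k
      using v_carrier[OF that(1)] that(2) by simp
    have "c i \<cdot>\<^sub>v v i = 0\<^sub>v n"
    proof (rule well_configured_cycle_kernel_sum_zero[OF wc dim _ _ i])
      show "c j \<cdot>\<^sub>v v j \<in> mat_kernel (C j)" if "j \<in> {1..m}" for j
        using mat_kernel_smult[OF carrier_matI[OF refl dim[OF that]] v_ker[OF that]] .
      show "(\<Sum>j=1..m. (c j \<cdot>\<^sub>v v j) $ k) = 0" if k: "k < n" for k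
      proof -
        have "(\<Sum>j=1..m. (c j \<cdot>\<^sub>v v j) $ k) = (\<Sum>j=1..m. c j * v j $ k)"
          using smult_index[OF _ k] by (rule sum.cong[OF refl])
        then show ?thesis using sum[OF k] by simp
      qed
    qed
    moreover obtain k where k: "k < n" "v i $ k \<noteq> 0"
    proof -
      have "v i = 0\<^sub>v n" if "\<forall>k<n. v i $ k = 0"
        using that v_carrier[OF i] by (intro eq_vecI) auto
      then show ?thesis using that v_nonzero[OF i] by blast
    qed
    ultimately show "c i = 0"
      using smult_index[OF i k(1)] by simp
  qed (use v_carrier in auto)
  then show ?thesis by simp
qed

definition erase_coord_mat :: "nat \<Rightarrow> nat \<Rightarrow> 'a :: comm_ring_1 mat" where
  "erase_coord_mat n k = mat n n (\<lambda>(a, b). if a = b \<and> a \<noteq> k then 1 else 0)"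

lemma erase_coord_mat_dim [simp]:
  "dim_row (erase_coord_mat n k) = n" "dim_col (erase_coord_mat n k) = n"
  by (simp_all add: erase_coord_mat_def)

lemma erase_coord_mat_carrier: "erase_coord_mat n k \<in> carrier_mat n n"
  by (simp add: carrier_matI)

lemma erase_coord_mat_mult_vec:
  assumes v: "v \<in> carrier_vec n"
  shows "erase_coord_mat n k *\<^sub>v v = vec n (\<lambda>a. if a = k then 0 else v $ a)"
proof (rule eq_vecI)
  fix a assume "a < dim_vec (vec n (\<lambda>a. if a = k then 0 else v $ a))"
  then have a: "a < n" by simp
  have "(erase_coord_mat n k *\<^sub>v v) $ a = (\<Sum>b<n. (if a = b \<and> a \<noteq> k then 1 else 0) * v $ b)"
    using v a by (simp add: erase_coord_mat_def scalar_prod_def lessThan_atLeast0)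
  also have "\<dots> = (\<Sum>b<n. if b = a then (if a = k then 0 else v $ a) else 0)"
    by (rule sum.cong) auto
  also have "\<dots> = vec n (\<lambda>a. if a = k then 0 else v $ a) $ a"
    using a by simp
  finally show "(erase_coord_mat n k *\<^sub>v v) $ a = vec n (\<lambda>a. if a = k then 0 else v $ a) $ a" .
qed simp

lemma erase_coord_mat_kernel_nontrivial:
  assumes "k < n"
  shows "mat_kernel (erase_coord_mat n k) \<noteq> {0\<^sub>v n}"
proof -
  have "unit_vec n k \<in> mat_kernel (erase_coord_mat n k)"
  proof (rule mat_kernelI[OF erase_coord_mat_carrier unit_vec_carrier])
    show "erase_coord_mat n k *\<^sub>v unit_vec n k = 0\<^sub>v n"
      using assms by (auto simp: erase_coord_mat_mult_vec)
  qed
  moreover have "unit_vec n k \<noteq> (0\<^sub>v n :: 'a vec)"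
  proof
    assume "unit_vec n k = (0\<^sub>v n :: 'a vec)"
    then have "unit_vec n k $ k = (0\<^sub>v n :: 'a vec) $ k" by simp
    then show False using assms by simp
  qed
  ultimately show ?thesis by blast
qed

lemma well_configured_cycle_erase_coord_mat:
  "well_configured_cycle m n (\<lambda>i. erase_coord_mat n (i - 1))"
  unfolding well_configured_cycle_def
proof (intro allI impI ballI)
  fix x :: "nat \<Rightarrow> real vec" and i j
  assume x: "\<forall>i\<in>{1..m}. x i \<in> carrier_vec n"
    and eq: "\<forall>i\<in>{1..m}. erase_coord_mat n (i - 1) *\<^sub>v x i = erase_coord_mat n (i - 1) *\<^sub>v x (cycle_pred m i)"
    and i: "i \<in> {1..m}" and j: "j \<in> {1..m}"
  have coord_eq: "x l $ k = x (cycle_pred m l) $ k" if l: "l \<in> {1..m}" "l \<noteq> Suc k" and k: "k < n" for l k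
  proof -
    have "vec n (\<lambda>a. if a = l - 1 then 0 else x l $ a) =
        vec n (\<lambda>a. if a = l - 1 then 0 else x (cycle_pred m l) $ a)"
      using eq x l(1) cycle_pred_in_range[OF l(1)] by (simp add: erase_coord_mat_mult_vec)
    then have "vec n (\<lambda>a. if a = l - 1 then 0 else x l $ a) $ k =
        vec n (\<lambda>a. if a = l - 1 then 0 else x (cycle_pred m l) $ a) $ k"
      by simp
    moreover have "k \<noteq> l - 1" using l by auto
    ultimately show ?thesis using k by simp
  qed
  have "x l $ k = x j $ k" if l: "l \<in> {1..m}" and k: "k < n" for l k
  proof -
    define s where "s = (if Suc k \<le> m then Suc k else 1)"
    have s: "s \<in> {1..m}" using i by (auto simp: s_def)
    have "x l' $ k = x (cycle_pred m l') $ k" if "l' \<in> {1..m}" "l' \<noteq> s" for l'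
      using coord_eq[OF that(1) _ k] that by (auto simp: s_def split: if_splits)
    then have "x l' $ k = x s $ k" if "l' \<in> {1..m}" for l'
      using cycle_constant_if_single_break[OF s _ that, of "\<lambda>l. x l $ k"] by blast
    then show ?thesis using l j by simp
  qed
  moreover have "x i \<in> carrier_vec n" "x j \<in> carrier_vec n"
    using x i j by auto
  ultimately show "x i = x j"
    using i by (intro eq_vecI) auto
qed

theorem corollary1:
  fixes m n :: nat
  assumes "m \<ge> 2"
  shows "(\<exists>C :: nat \<Rightarrow> real mat.
            (\<forall>i\<in>{1..m}. dim_col (C i) = n \<and> mat_kernel (C i) \<noteq> {0\<^sub>v n}) \<and>
            well_configured_cycle m n C)
         \<longleftrightarrow> m \<le> n"
proof
  assume "\<exists>C :: nat \<Rightarrow> real mat.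
            (\<forall>i\<in>{1..m}. dim_col (C i) = n \<and> mat_kernel (C i) \<noteq> {0\<^sub>v n}) \<and>
            well_configured_cycle m n C"
  then show "m \<le> n"
    using le_if_well_configured_cycle by blast
next
  assume "m \<le> n"
  then have "mat_kernel (erase_coord_mat n (i - 1) :: real mat) \<noteq> {0\<^sub>v n}"
    if "i \<in> {1..m}" for i
    using that by (intro erase_coord_mat_kernel_nontrivial) auto
  then show "\<exists>C :: nat \<Rightarrow> real mat.
            (\<forall>i\<in>{1..m}. dim_col (C i) = n \<and> mat_kernel (C i) \<noteq> {0\<^sub>v n}) \<and>
            well_configured_cycle m n C"
    using well_configured_cycle_erase_coord_mat[of m n]
    by (intro exI[of _ "\<lambda>i. erase_coord_mat n (i - 1)"]) auto
qed

end
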